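(* Let $f=a_1+2a_2+4a_3+8a_4\in\mathcal{GB}_n^{16}$ with $a_1,a_2,a_3,a_4\in\mathcal{B}_n$. Then $f$ is gbent if and only if: (i) when $n$ is even: for all $c_1,c_2,c_3\in\mathbb{F}_2$ the Boolean function $c_1a_1\oplus c_2a_2\oplus c_3a_3\oplus a_4$ is bent, and for all $\mathbf{u}\in\mathbb{F}_2^n$ $$\mathcal{W}_{a_4}(\mathbf{u})\mathcal{W}_{a_2\oplus a_4}(\mathbf{u})=\mathcal{W}_{a_3\oplus a_4}(\mathbf{u})\mathcal{W}_{a_2\oplus a_3\oplus a_4}(\mathbf{u})=\mathcal{W}_{a_1\oplus a_4}(\mathbf{u})\mathcal{W}_{a_1\oplus a_2\oplus a_4}(\mathbf{u})=\mathcal{W}_{a_1\oplus a_3\oplus a_4}(\mathbf{u})\mathcal{W}_{a_1\oplus a_2\oplus a_3\oplus a_4}(\mathbf{u})$$ and $\mathcal{W}_{a_4}(\mathbf{u})\mathcal{W}_{a_3\oplus a_4}(\mathbf{u})=\mathcal{W}_{a_1\oplus a_4}(\mathbf{u})\mathcal{W}_{a_1\oplus a_3\oplus a_4}(\mathbf{u})$; (ii) when $n$ is odd: for all $c_1,c_2,c_3\in\mathbb{F}_2$ the Boolean function $c_1a_1\oplus c_2a_2\oplus c_3a_3\oplus a_4$ is semibent, and for every $\mathbf{u}\in\mathbb{F}_2^n$ one of the following holds: either $\mathcal{W}_{a_4}(\mathbf{u})\mathcal{W}_{a_2\oplus a_4}(\mathbf{u})=\mathcal{W}_{a_1\oplus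 a_4}(\mathbf{u})\mathcal{W}_{a_1\oplus a_2\oplus a_4}(\mathbf{u})=\pm2^{n+1}$ and $\mathcal{W}_{a_3\oplus a_4}(\mathbf{u})=\mathcal{W}_{a_2\oplus a_3\oplus a_4}(\mathbf{u})=\mathcal{W}_{a_1\oplus a_3\oplus a_4}(\mathbf{u})=\mathcal{W}_{a_1\oplus a_2\oplus a_3\oplus a_4}(\mathbf{u})=0$; or $\mathcal{W}_{a_4}(\mathbf{u})=\mathcal{W}_{a_2\oplus a_4}(\mathbf{u})=\mathcal{W}_{a_1\oplus a_4}(\mathbf{u})=\mathcal{W}_{a_1\oplus a_2\oplus a_4}(\mathbf{u})=0$ and $\mathcal{W}_{a_3\oplus a_4}(\mathbf{u})\mathcal{W}_{a_2\oplus a_3\oplus a_4}(\mathbf{u})=\mathcal{W}_{a_1\oplus a_3\oplus a_4}(\mathbf{u})\mathcal{W}_{a_1\oplus a_2\oplus a_3\oplus a_4}(\mathbf{u})=\pm2^{n+1}$.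
   Context: $\mathcal{B}_n$: Boolean functions $\mathbb{F}_2^n\to\mathbb{F}_2$; $\mathcal{GB}_n^q$: functions $\mathbb{F}_2^n\to\mathbb{Z}_q$; in $a_1+2a_2+4a_3+8a_4$ the values $0,1$ are viewed as integers and the sum is taken in $\mathbb{Z}_{16}$, while $\oplus$ is addition in $\mathbb{F}_2$. Walsh–Hadamard transform: $\mathcal{W}_g(\mathbf{u})=\sum_{\mathbf{x}\in\mathbb{F}_2^n}(-1)^{g(\mathbf{x})+\mathbf{u}\cdot\mathbf{x}}$. Generalized Walsh–Hadamard transform: $\mathcal{H}^{(q)}_f(\mathbf{u})=\sum_{\mathbf{x}}\zeta_q^{f(\mathbf{x})}(-1)^{\mathbf{u}\cdot\mathbf{x}}$, $\zeta_q=e^{2\pi i/q}$. $f\in\mathcal{GB}_n^q$ is gbent if $|\mathcal{H}^{(q)}_f(\mathbf{u})|=2^{n/2}$ for all $\mathbf{u}$. $g\in\mathcal{B}_n$ is bent if $|\mathcal{W}_g(\mathbf{u})|=2^{n/2}$ for all $\mathbf{u}$; $g$ is semibent if $|\mathcal{W}_g(\mathbf{u})|\in\{0,2^{(n+1)/2}\}$ for all $\mathbf{u}$ when $n$ is odd, resp. $\{0,2^{(n+2)/2}\}$ when $n$ is even. *)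

theory Defs
  imports Complex_Main
begin

text \<open>The space F_2^n is modelled by boolean lists of length n
  (True = 1, False = 0). Boolean functions in B_n are functions
  bool list => bool, considered on this carrier only.\<close>

definition vecs :: "nat \<Rightarrow> bool list set" where
  "vecs n = {xs. length xs = n}"

definition dotp :: "bool list \<Rightarrow> bool list \<Rightarrow> bool" where
  "dotp u x = odd (card {i. i < length x \<and> u ! i \<and> x ! i})"

definition bxor :: "bool \<Rightarrow> bool \<Rightarrow> bool" where
  "bxor a b = (a \<noteq> b)"

definition walsh :: "nat \<Rightarrow> (bool list \<Rightarrow> bool) \<Rightarrow> bool list \<Rightarrow> real" where
  "walsh n g u = (\<Sum>x\<in>vecs n. (-1) ^ (of_bool (g x) + of_bool (dotp u x)))"

text \<open>Generalized Walsh-Hadamard transform for f : F_2^n -> Z_q,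
  values of f taken as natural numbers representing residues mod q.\<close>
definition gwalsh :: "nat \<Rightarrow> nat \<Rightarrow> (bool list \<Rightarrow> nat) \<Rightarrow> bool list \<Rightarrow> complex" where
  "gwalsh q n f u = (\<Sum>x\<in>vecs n. cis (2 * pi / real q) ^ f x * (-1) ^ of_bool (dotp u x))"

definition gbent :: "nat \<Rightarrow> nat \<Rightarrow> (bool list \<Rightarrow> nat) \<Rightarrow> bool" where
  "gbent q n f = (\<forall>u\<in>vecs n. cmod (gwalsh q n f u) = 2 powr (real n / 2))"

definition bent :: "nat \<Rightarrow> (bool list \<Rightarrow> bool) \<Rightarrow> bool" where
  "bent n g = (\<forall>u\<in>vecs n. \<bar>walsh n g u\<bar> = 2 powr (real n / 2))"

definition semibent :: "nat \<Rightarrow> (bool list \<Rightarrow> bool) \<Rightarrow> bool" where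
  "semibent n g = (\<forall>u\<in>vecs n. \<bar>walsh n g u\<bar> \<in>
     (if odd n then {0, 2 powr ((real n + 1) / 2)} else {0, 2 powr ((real n + 2) / 2)}))"

end

theory Submission
  imports Defs
begin

text \<open>Group the points x by their level j(x) = a1(x) + 2 a2(x) + 4 a3(x) \<in> {0..7}. Then
  H_f(u) = \<Sum>_k m_k \<zeta>^k with \<zeta> = e^{i\<pi>/8} and integers m_k, and the eight Walsh values
  W_{c1 a1 \<oplus> c2 a2 \<oplus> c3 a3 \<oplus> a4}(u) form the Hadamard transform of m.
  Since \<zeta>^8 = -1, |\<Sum>_k m_k \<zeta>^k|^2 = c0 + c1 \<eta> + c2 (\<eta>^2 - 2) + c3 (\<eta>^3 - 3\<eta>), where
  \<eta> = 2 cos(\<pi>/8) has degree 4 over \<rat> and the c_s are the negacyclic autocorrelations of m;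
  so f is gbent at u iff c0 = 2^n and c1 = c2 = c3 = 0.
  Multiplication by 1 - \<zeta>^4 doubles every c_s, and the parities of the c_s force m to be such a
  product, so induction on n shows that the solutions are exactly \<plusminus>2^{n/2} \<zeta>^k for even n and
  2^{(n-1)/2} (\<plusminus>\<zeta>^k \<plusminus> \<zeta>^{k+4}) for odd n. The Walsh conditions of the theorem describe
  precisely the Hadamard transforms of these vectors.\<close>

lemma sum_lessThan_8: "(\<Sum>k<8. h k) = h 0 + h 1 + h 2 + h 3 + h 4 + h 5 + h 6 + h 7"
  for h :: "nat \<Rightarrow> 'a::comm_monoid_add"
  by (simp add: eval_nat_numeral lessThan_Suc ac_simps)

lemma less_8_cases:
  assumes "k < (8::nat)"
  obtains "k = 0" | "k = 1" | "k = 2" | "k = 3" | "k = 4" | "k = 5" | "k = 6" | "k = 7"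
  using assms by fastforce

lemma all_less_8: "(\<forall>c<8. P c) \<longleftrightarrow> P 0 \<and> P 1 \<and> P 2 \<and> P 3 \<and> P 4 \<and> P 5 \<and> P 6 \<and> P 7"
  for P :: "nat \<Rightarrow> bool"
  by (auto elim: less_8_cases)

lemma ex_less_8: "(\<exists>c<8. P c) \<longleftrightarrow> P 0 \<or> P 1 \<or> P 2 \<or> P 3 \<or> P 4 \<or> P 5 \<or> P 6 \<or> P 7"
  for P :: "nat \<Rightarrow> bool"
  using all_less_8[of "\<lambda>c. \<not> P c"] by blast

section \<open>Negacyclic autocorrelation\<close>

text \<open>A vector v :: nat \<Rightarrow> int stands for \<Sum>_{j<8} v_j \<zeta>^j with \<zeta>^8 = -1;
  corr v s is its negacyclic autocorrelation at shift s.\<close>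

definition corr :: "(nat \<Rightarrow> int) \<Rightarrow> nat \<Rightarrow> int" where
  "corr v s = (\<Sum>j<8. v j * (if j + s < 8 then v (j + s) else - v (j + s - 8)))"

definition flat_corr :: "nat \<Rightarrow> (nat \<Rightarrow> int) \<Rightarrow> bool" where
  "flat_corr n v \<longleftrightarrow> corr v 0 = 2 ^ n \<and> corr v 1 = 0 \<and> corr v 2 = 0 \<and> corr v 3 = 0"

lemma corr_expand:
  "corr v 0 = (v 0)\<^sup>2 + (v 1)\<^sup>2 + (v 2)\<^sup>2 + (v 3)\<^sup>2 + (v 4)\<^sup>2 + (v 5)\<^sup>2 + (v 6)\<^sup>2 + (v 7)\<^sup>2"
  "corr v 1 = v 0 * v 1 + v 1 * v 2 + v 2 * v 3 + v 3 * v 4 + v 4 * v 5 + v 5 * v 6 + v 6 * v 7 - v 7 * v 0"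
  "corr v 2 = v 0 * v 2 + v 1 * v 3 + v 2 * v 4 + v 3 * v 5 + v 4 * v 6 + v 5 * v 7 - v 6 * v 0 - v 7 * v 1"
  "corr v 3 = v 0 * v 3 + v 1 * v 4 + v 2 * v 5 + v 3 * v 6 + v 4 * v 7 - v 5 * v 0 - v 6 * v 1 - v 7 * v 2"
  by (simp_all add: corr_def sum_lessThan_8 eval_nat_numeral power2_eq_square)

lemma corr_cong:
  assumes "\<And>j. j < 8 \<Longrightarrow> v j = w j" and "s \<le> 8"
  shows "corr v s = corr w s"
  unfolding corr_def using assms by (intro sum.cong) auto

section \<open>The norm of \<Sum>_j v_j \<zeta>^j\<close>

lemma nat_sq_eq_twice_sq_imp_zero: "(k::nat)\<^sup>2 = 2 * j\<^sup>2 \<Longrightarrow> j = 0"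
proof (induction j arbitrary: k rule: less_induct)
  case (less j)
  show ?case
  proof (rule ccontr)
    assume "j \<noteq> 0"
    from less.prems have "even k" by (metis dvd_triv_left even_power)
    then obtain k' where k': "k = 2 * k'" by blast
    with less.prems have j_sq: "j\<^sup>2 = 2 * k'\<^sup>2" by (simp add: power_mult_distrib)
    then have "even j" by (metis dvd_triv_left even_power)
    then obtain j' where j': "j = 2 * j'" by blast
    with j_sq have "k'\<^sup>2 = 2 * j'\<^sup>2" by (simp add: power_mult_distrib)
    moreover have "j' < j" using j' \<open>j \<noteq> 0\<close> by simp
    ultimately have "j' = 0" using less.IH by blast
    with j' \<open>j \<noteq> 0\<close> show False by simp
  qed
qed

lemma int_sq_eq_twice_sq_imp_zero:
  assumes "(k::int)\<^sup>2 = 2 * j\<^sup>2"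
  shows "j = 0"
proof -
  have "int ((nat \<bar>k\<bar>)\<^sup>2) = int (2 * (nat \<bar>j\<bar>)\<^sup>2)" using assms by simp
  then have "(nat \<bar>k\<bar>)\<^sup>2 = 2 * (nat \<bar>j\<bar>)\<^sup>2" by (simp only: of_nat_eq_iff)
  then have "nat \<bar>j\<bar> = 0" by (rule nat_sq_eq_twice_sq_imp_zero)
  then show "j = 0" by simp
qed

lemma sqrt2_lin_indep:
  fixes x y :: int
  assumes "x + y * sqrt 2 = 0"
  shows "x = 0 \<and> y = 0"
proof -
  have "real_of_int x = - (y * sqrt 2)" using assms by linarith
  then have "real_of_int (x\<^sup>2) = real_of_int (2 * y\<^sup>2)" by (simp add: power_mult_distrib)
  then have "y = 0" by (intro int_sq_eq_twice_sq_imp_zero[of x]) (simp only: of_int_eq_iff)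
  with assms show ?thesis by simp
qed

lemma two_plus_sqrt2_not_square:
  fixes u v a c :: int
  assumes "(u + v * sqrt 2)\<^sup>2 = (a + c * sqrt 2)\<^sup>2 * (2 + sqrt 2)"
  shows "a = 0 \<and> c = 0"
proof -
  have "real_of_int (u\<^sup>2 + 2*v\<^sup>2 - (2*a\<^sup>2 + 4*c\<^sup>2 + 4*a*c))
      + real_of_int (2*u*v - (a\<^sup>2 + 2*c\<^sup>2 + 4*a*c)) * sqrt 2 = 0"
    using assms by (simp add: algebra_simps power2_eq_square)
  from sqrt2_lin_indep[OF this]
  have e: "u\<^sup>2 + 2*v\<^sup>2 = 2*a\<^sup>2 + 4*c\<^sup>2 + 4*a*c" "2*u*v = a\<^sup>2 + 2*c\<^sup>2 + 4*a*c"
    by auto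
  have "(u\<^sup>2 - 2*v\<^sup>2)\<^sup>2 = (u\<^sup>2 + 2*v\<^sup>2)\<^sup>2 - 2*(2*u*v)\<^sup>2" by (simp add: algebra_simps power2_eq_square)
  also have "\<dots> = 2 * (a\<^sup>2 - 2*c\<^sup>2)\<^sup>2" unfolding e by (simp add: algebra_simps power2_eq_square)
  finally have "a\<^sup>2 - 2*c\<^sup>2 = 0" by (rule int_sq_eq_twice_sq_imp_zero)
  then have "a\<^sup>2 = 2 * c\<^sup>2" by simp
  then have "c = 0" by (rule int_sq_eq_twice_sq_imp_zero)
  with \<open>a\<^sup>2 = 2 * c\<^sup>2\<close> show ?thesis by simp
qed

definition eta :: real where
  "eta = 2 * cos (pi / 8)"

lemma eta_squared: "eta\<^sup>2 = 2 + sqrt 2"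
proof -
  have "2 * cos (pi / 8) ^ 2 - 1 = cos (2 * (pi / 8))" by (rule cos_double_cos[symmetric])
  also have "\<dots> = sqrt 2 / 2" using cos_45 by simp
  finally show ?thesis unfolding eta_def by (simp add: power_mult_distrib)
qed

lemma eta_lin_indep:
  fixes a b c d :: int
  assumes "a + b * eta + c * eta\<^sup>2 + d * eta ^ 3 = 0"
  shows "a = 0 \<and> b = 0 \<and> c = 0 \<and> d = 0"
proof -
  define A where "A = real_of_int (a + 2*c) + c * sqrt 2"
  define B where "B = real_of_int (b + 2*d) + d * sqrt 2"
  have "eta ^ 3 = (2 + sqrt 2) * eta" using eta_squared by (simp add: power3_eq_cube power2_eq_square)
  then have "A + eta * B = 0" using assms unfolding A_def B_def eta_squared by (simp add: algebra_simps)
  then have "A = - (eta * B)" by linarith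
  then have "A\<^sup>2 = B\<^sup>2 * (2 + sqrt 2)" by (simp add: power_mult_distrib eta_squared)
  then have "b + 2*d = 0 \<and> d = 0" unfolding A_def B_def by (rule two_plus_sqrt2_not_square)
  moreover from this have "a + 2*c = 0 \<and> c = 0"
    using \<open>A + eta * B = 0\<close> unfolding A_def B_def by (intro sqrt2_lin_indep) auto
  ultimately show ?thesis by auto
qed

definition zeta :: complex where
  "zeta = cis (pi / 8)"

definition zeta_sum :: "(nat \<Rightarrow> int) \<Rightarrow> complex" where
  "zeta_sum v = (\<Sum>j<8. of_int (v j) * zeta ^ j)"

lemma zeta_pow_8: "zeta ^ 8 = -1"
  unfolding zeta_def DeMoivre by simp

lemma negacyclic_product_identity:
  fixes z w t :: complex and a :: "nat \<Rightarrow> complex"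
  assumes "z * w = 1" "z ^ 4 + w ^ 4 = 0" "z + w = t"
  shows "(\<Sum>j<8. a j * z ^ j) * (\<Sum>j<8. a j * w ^ j) =
    ((a 0)\<^sup>2 + (a 1)\<^sup>2 + (a 2)\<^sup>2 + (a 3)\<^sup>2 + (a 4)\<^sup>2 + (a 5)\<^sup>2 + (a 6)\<^sup>2 + (a 7)\<^sup>2)
    + (a 0 * a 1 + a 1 * a 2 + a 2 * a 3 + a 3 * a 4 + a 4 * a 5 + a 5 * a 6 + a 6 * a 7 - a 7 * a 0) * t
    + (a 0 * a 2 + a 1 * a 3 + a 2 * a 4 + a 3 * a 5 + a 4 * a 6 + a 5 * a 7 - a 6 * a 0 - a 7 * a 1) * (t\<^sup>2 - 2)
    + (a 0 * a 3 + a 1 * a 4 + a 2 * a 5 + a 3 * a 6 + a 4 * a 7 - a 5 * a 0 - a 6 * a 1 - a 7 * a 2) * (t ^ 3 - 3 * t)"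
  unfolding sum_lessThan_8 power_0 power_one_right mult_1_right using assms by algebra

lemma norm_zeta_sum_squared:
  "(cmod (zeta_sum v))\<^sup>2 =
     corr v 0 + corr v 1 * eta + corr v 2 * (eta\<^sup>2 - 2) + corr v 3 * (eta ^ 3 - 3 * eta)"
proof -
  have zeta_cnj: "zeta * cnj zeta = 1" unfolding zeta_def by (simp add: cis_cnj cis_mult)
  have "zeta ^ 4 = \<i>" unfolding zeta_def DeMoivre by simp
  then have zeta_4: "zeta ^ 4 + cnj zeta ^ 4 = 0" by (simp flip: complex_cnj_power)
  have zeta_eta: "zeta + cnj zeta = of_real eta" unfolding zeta_def eta_def by (simp add: complex_eq_iff)
  have "complex_of_real ((cmod (zeta_sum v))\<^sup>2) = zeta_sum v * cnj (zeta_sum v)"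
    by (rule complex_norm_square)
  also have "\<dots> = (\<Sum>j<8. of_int (v j) * zeta ^ j) * (\<Sum>j<8. of_int (v j) * cnj zeta ^ j)"
    unfolding zeta_sum_def by simp
  also have "\<dots> = of_real (corr v 0 + corr v 1 * eta + corr v 2 * (eta\<^sup>2 - 2) + corr v 3 * (eta ^ 3 - 3 * eta))"
    unfolding negacyclic_product_identity[OF zeta_cnj zeta_4 zeta_eta] corr_expand by simp
  finally show ?thesis by (simp only: of_real_eq_iff)
qed

lemma norm_zeta_sum_eq_iff_flat_corr:
  "cmod (zeta_sum v) = 2 powr (real n / 2) \<longleftrightarrow> flat_corr n v"
proof -
  have "(2 powr (real n / 2))\<^sup>2 = 2 powr real n"
    by (simp add: power2_eq_square flip: powr_add)
  then have "cmod (zeta_sum v) = 2 powr (real n / 2) \<longleftrightarrow> (cmod (zeta_sum v))\<^sup>2 = 2 ^ n"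
    by (metis norm_ge_zero powr_ge_zero power2_eq_iff_nonneg powr_realpow zero_less_numeral)
  also have "\<dots> \<longleftrightarrow> real_of_int (corr v 0 - 2 ^ n - 2 * corr v 2) + real_of_int (corr v 1 - 3 * corr v 3) * eta
      + real_of_int (corr v 2) * eta\<^sup>2 + real_of_int (corr v 3) * eta ^ 3 = 0"
    unfolding norm_zeta_sum_squared by (simp add: algebra_simps)
  also have "\<dots> \<longleftrightarrow> flat_corr n v"
  proof
    assume "real_of_int (corr v 0 - 2 ^ n - 2 * corr v 2) + real_of_int (corr v 1 - 3 * corr v 3) * eta
      + real_of_int (corr v 2) * eta\<^sup>2 + real_of_int (corr v 3) * eta ^ 3 = 0"
    from eta_lin_indep[OF this] show "flat_corr n v" by (simp add: flat_corr_def)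
  qed (simp add: flat_corr_def)
  finally show ?thesis .
qed

section \<open>Classification of vectors with flat autocorrelation\<close>

text \<open>Coordinates of (1 - \<zeta>^4) v(\<zeta>), where \<zeta>^4 = \<i>.\<close>

definition times_one_minus_i :: "(nat \<Rightarrow> int) \<Rightarrow> nat \<Rightarrow> int" where
  "times_one_minus_i v j = (if j < 4 then v j + v (j + 4) else v j - v (j - 4))"

lemma corr_times_one_minus_i:
  "corr (times_one_minus_i v) 0 = 2 * corr v 0" "corr (times_one_minus_i v) 1 = 2 * corr v 1"
  "corr (times_one_minus_i v) 2 = 2 * corr v 2" "corr (times_one_minus_i v) 3 = 2 * corr v 3"
  unfolding corr_expand by (simp_all add: times_one_minus_i_def algebra_simps power2_eq_square)

lemma corr_even_imp_even_sums:
  assumes "even (corr v 0)" "even (corr v 1)" "even (corr v 2)" "even (corr v 3)"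
  shows "\<forall>j<4. even (v j + v (j + 4))"
proof -
  have "even (v 0 + v 4) \<and> even (v 1 + v 5) \<and> even (v 2 + v 6) \<and> even (v 3 + v 7)"
    using assms unfolding corr_expand by simp sat
  then show ?thesis by (auto simp: less_Suc_eq numeral_eq_Suc)
qed

lemma times_one_minus_i_preimage:
  assumes "\<forall>j<4. even (v j + v (j + 4))"
  shows "\<exists>w. \<forall>j<8. times_one_minus_i w j = v j"
proof (intro exI allI impI)
  define w where "w j = (if j < 4 then (v j - v (j + 4)) div 2 else (v (j - 4) + v j) div 2)" for j
  fix j :: nat assume "j < 8"
  define i where "i = (if j < 4 then j else j - 4)"
  have "i < 4" "even (v i + v (i + 4))" using assms \<open>j < 8\<close> by (auto simp: i_def)
  then obtain k where k: "v i + v (i + 4) = 2 * k" by blast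
  have "w i = v i - k" "w (i + 4) = k" using k \<open>i < 4\<close> by (auto simp: w_def)
  then show "times_one_minus_i w j = v j"
    using k \<open>j < 8\<close> by (auto simp: times_one_minus_i_def i_def split: if_splits)
qed

definition signed_monomial :: "int \<Rightarrow> (nat \<Rightarrow> int) \<Rightarrow> bool" where
  "signed_monomial K v \<longleftrightarrow> (\<exists>k<8. \<exists>c\<in>{K, -K}. \<forall>j<8. v j = (if j = k then c else 0))"

definition signed_binomial :: "int \<Rightarrow> (nat \<Rightarrow> int) \<Rightarrow> bool" where
  "signed_binomial K v \<longleftrightarrow>
     (\<exists>k<4. \<exists>c\<in>{K, -K}. \<exists>d\<in>{K, -K}. \<forall>j<8. v j = (if j = k then c else if j = k + 4 then d else 0))"

lemma sum_squares_eq_1: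
  fixes v :: "'a \<Rightarrow> int"
  assumes "finite A" and "(\<Sum>j\<in>A. (v j)\<^sup>2) = 1"
  obtains k where "k \<in> A" "v k = 1 \<or> v k = -1" "\<And>j. j \<in> A \<Longrightarrow> j \<noteq> k \<Longrightarrow> v j = 0"
proof -
  have "\<exists>k\<in>A. v k \<noteq> 0"
  proof (rule ccontr)
    assume "\<not> (\<exists>k\<in>A. v k \<noteq> 0)"
    then have "(\<Sum>j\<in>A. (v j)\<^sup>2) = 0" by simp
    with assms(2) show False by simp
  qed
  then obtain k where k: "k \<in> A" "v k \<noteq> 0" by blast
  have "(v k)\<^sup>2 + (\<Sum>j\<in>A - {k}. (v j)\<^sup>2) = 1"
    using assms(2) sum.remove[OF assms(1) k(1), of "\<lambda>j. (v j)\<^sup>2"] by simp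
  moreover have "1 \<le> (v k)\<^sup>2" using k(2) by (simp add: int_one_le_iff_zero_less)
  moreover have "0 \<le> (\<Sum>j\<in>A - {k}. (v j)\<^sup>2)" by (simp add: sum_nonneg)
  ultimately have "(v k)\<^sup>2 = 1" and "(\<Sum>j\<in>A - {k}. (v j)\<^sup>2) = 0" by linarith+
  then have "v k = 1 \<or> v k = -1" and "\<forall>j\<in>A - {k}. v j = 0"
    using assms(1) by (simp_all add: power2_eq_1_iff sum_nonneg_eq_0_iff)
  with k(1) show thesis by (intro that) auto
qed

lemma signed_monomial_if_corr_0_eq_1:
  assumes "corr v 0 = 1"
  shows "signed_monomial 1 v"
proof -
  have "(\<Sum>j<8. (v j)\<^sup>2) = 1" using assms by (simp add: corr_def power2_eq_square)
  then obtain k where "k < 8" "v k = 1 \<or> v k = -1" "\<And>j. j < 8 \<Longrightarrow> j \<noteq> k \<Longrightarrow> v j = 0"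
    by (rule sum_squares_eq_1[OF finite_lessThan]) auto
  then show ?thesis unfolding signed_monomial_def by (intro exI[of _ k]) auto
qed

lemma times_one_minus_i_signed_monomial:
  assumes "signed_monomial K w" and v: "\<And>j. j < 8 \<Longrightarrow> times_one_minus_i w j = v j"
  shows "signed_binomial K v"
proof -
  obtain k c where k: "k < 8" "c \<in> {K, -K}" and w: "\<And>j. j < 8 \<Longrightarrow> w j = (if j = k then c else 0)"
    using assms(1) unfolding signed_monomial_def by blast
  show ?thesis
  proof (cases "k < 4")
    case True
    then have "\<forall>j<8. v j = (if j = k then c else if j = k + 4 then - c else 0)"
      by (auto simp: v[symmetric] w times_one_minus_i_def)
    with True k show ?thesis unfolding signed_binomial_def by force
  next
    case False
    then have "\<forall>j<8. v j = (if j = k - 4 then c else if j = k - 4 + 4 then c else 0)"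
      using k by (auto simp: v[symmetric] w times_one_minus_i_def)
    with False k show ?thesis unfolding signed_binomial_def by (intro exI[of _ "k - 4"]) auto
  qed
qed

lemma times_one_minus_i_signed_binomial:
  assumes "signed_binomial K w" and v: "\<And>j. j < 8 \<Longrightarrow> times_one_minus_i w j = v j"
  shows "signed_monomial (2 * K) v"
proof -
  obtain k c d where k: "k < 4" "c \<in> {K, -K}" "d \<in> {K, -K}"
    and w: "\<And>j. j < 8 \<Longrightarrow> w j = (if j = k then c else if j = k + 4 then d else 0)"
    using assms(1) unfolding signed_binomial_def by blast
  have v_eq: "\<forall>j<8. v j = (if j = k then c + d else if j = k + 4 then d - c else 0)"
    using k(1) by (auto simp: v[symmetric] w times_one_minus_i_def)
  show ?thesis
  proof (cases "d = c")
    case True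
    with v_eq k show ?thesis unfolding signed_monomial_def by (intro exI[of _ k]) auto
  next
    case False
    with k have "d = - c" by auto
    with v_eq k show ?thesis unfolding signed_monomial_def by (intro exI[of _ "k + 4"]) auto
  qed
qed

lemma flat_corr_classification:
  "flat_corr n v \<Longrightarrow>
     (if even n then signed_monomial (2 ^ (n div 2)) v else signed_binomial (2 ^ (n div 2)) v)"
proof (induction n arbitrary: v)
  case 0
  then show ?case by (simp add: flat_corr_def signed_monomial_if_corr_0_eq_1)
next
  case (Suc n)
  then have "\<forall>j<4. even (v j + v (j + 4))"
    by (intro corr_even_imp_even_sums) (auto simp: flat_corr_def)
  then obtain w where w: "\<And>j. j < 8 \<Longrightarrow> times_one_minus_i w j = v j"
    using times_one_minus_i_preimage by blast
  have "corr v s = 2 * corr w s" if "s \<in> {0, 1, 2, 3}" for s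
  proof -
    have "corr v s = corr (times_one_minus_i w) s" using w that by (intro corr_cong) auto
    with that show ?thesis using corr_times_one_minus_i by auto
  qed
  from this[of 0] this[of 1] this[of 2] this[of 3] have "flat_corr n w"
    using Suc.prems by (simp add: flat_corr_def)
  note IH = Suc.IH[OF this]
  show ?case
  proof (cases "even n")
    case True
    then show ?thesis using IH times_one_minus_i_signed_monomial[OF _ w] by simp
  next
    case False
    then have "Suc n div 2 = Suc (n div 2)" by presburger
    with False show ?thesis using IH times_one_minus_i_signed_binomial[OF _ w] by simp
  qed
qed

lemma flat_corr_if_signed_monomial:
  assumes "signed_monomial K v" and "K\<^sup>2 = 2 ^ n"
  shows "flat_corr n v"
proof -
  obtain k c where "k < 8" "c \<in> {K, -K}" and v: "\<forall>j<8. v j = (if j = k then c else 0)"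
    using assms(1) unfolding signed_monomial_def by blast
  then have "corr v 0 = c\<^sup>2 \<and> corr v 1 = 0 \<and> corr v 2 = 0 \<and> corr v 3 = 0"
    unfolding corr_expand using v unfolding all_less_8
    by (cases rule: less_8_cases) simp_all
  with \<open>c \<in> {K, -K}\<close> assms(2) show ?thesis by (auto simp: flat_corr_def)
qed

lemma flat_corr_if_signed_binomial:
  assumes "signed_binomial K v" and "2 * K\<^sup>2 = 2 ^ n"
  shows "flat_corr n v"
proof -
  obtain k c d where "k < 4" "c \<in> {K, -K}" "d \<in> {K, -K}"
    and v: "\<forall>j<8. v j = (if j = k then c else if j = k + 4 then d else 0)"
    using assms(1) unfolding signed_binomial_def by blast
  from \<open>k < 4\<close> have "k = 0 \<or> k = 1 \<or> k = 2 \<or> k = 3" by linarith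
  then have "corr v 0 = c\<^sup>2 + d\<^sup>2 \<and> corr v 1 = 0 \<and> corr v 2 = 0 \<and> corr v 3 = 0"
    unfolding corr_expand using v unfolding all_less_8 by (elim disjE) simp_all
  with \<open>c \<in> {K, -K}\<close> \<open>d \<in> {K, -K}\<close> assms(2) show ?thesis by (auto simp: flat_corr_def)
qed

section \<open>The Hadamard transform of length 8\<close>

text \<open>The character (-1)^{c \<bullet> k} of \<bbbF>_2^3, with c and k read as 3-bit vectors.\<close>

definition walsh_sign :: "nat \<Rightarrow> nat \<Rightarrow> int" where
  "walsh_sign c k = (-1) ^ (of_bool (odd c \<and> odd k) + of_bool (odd (c div 2) \<and> odd (k div 2))
                           + of_bool (odd (c div 4) \<and> odd (k div 4)))"

definition hadamard :: "(nat \<Rightarrow> int) \<Rightarrow> nat \<Rightarrow> int" where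
  "hadamard v c = (\<Sum>k<8. walsh_sign c k * v k)"

lemma abs_walsh_sign [simp]: "\<bar>walsh_sign c k\<bar> = 1"
  by (simp add: walsh_sign_def)

lemma hadamard_single:
  assumes "k < 8" and "\<And>j. j < 8 \<Longrightarrow> v j = (if j = k then c else 0)"
  shows "hadamard v d = walsh_sign d k * c"
proof -
  have "hadamard v d = (\<Sum>j<8. if j = k then walsh_sign d j * c else 0)"
    unfolding hadamard_def using assms(2) by (intro sum.cong) auto
  with assms(1) show ?thesis by simp
qed

lemma hadamard_pair:
  assumes "k < 4" and "\<And>j. j < 8 \<Longrightarrow> v j = (if j = k then c else if j = k + 4 then d else 0)"
  shows "hadamard v e = walsh_sign e k * c + walsh_sign e (k + 4) * d"
proof -
  have "hadamard v e = (\<Sum>j<8. (if j = k then walsh_sign e j * c else 0) + (if j = k + 4 then walsh_sign e j * d else 0))"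
    unfolding hadamard_def using assms by (intro sum.cong) auto
  with assms(1) show ?thesis by (simp add: sum.distrib)
qed

lemma walsh_sign_shift_4:
  assumes "k < 4" and "d < 8"
  shows "walsh_sign d (k + 4) = (if d < 4 then walsh_sign d k else - walsh_sign d k)"
    and "4 \<le> d \<Longrightarrow> walsh_sign d k = walsh_sign (d - 4) k"
proof -
  from assms have "k = 0 \<or> k = 1 \<or> k = 2 \<or> k = 3" by linarith
  with assms(2) show "walsh_sign d (k + 4) = (if d < 4 then walsh_sign d k else - walsh_sign d k)"
    by (cases rule: less_8_cases) (auto simp: walsh_sign_def)
  show "walsh_sign d k = walsh_sign (d - 4) k" if "4 \<le> d"
    using assms(2) \<open>k = 0 \<or> k = 1 \<or> k = 2 \<or> k = 3\<close> that
    by (cases rule: less_8_cases) (auto simp: walsh_sign_def)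
qed

lemma hadamard_expand:
    "hadamard v 0 = v 0 + v 1 + v 2 + v 3 + v 4 + v 5 + v 6 + v 7"
    "hadamard v 1 = v 0 - v 1 + v 2 - v 3 + v 4 - v 5 + v 6 - v 7"
    "hadamard v 2 = v 0 + v 1 - v 2 - v 3 + v 4 + v 5 - v 6 - v 7"
    "hadamard v 3 = v 0 - v 1 - v 2 + v 3 + v 4 - v 5 - v 6 + v 7"
    "hadamard v 4 = v 0 + v 1 + v 2 + v 3 - v 4 - v 5 - v 6 - v 7"
    "hadamard v 5 = v 0 - v 1 + v 2 - v 3 - v 4 + v 5 - v 6 + v 7"
    "hadamard v 6 = v 0 + v 1 - v 2 - v 3 - v 4 - v 5 + v 6 + v 7"
    "hadamard v 7 = v 0 - v 1 - v 2 + v 3 - v 4 + v 5 + v 6 - v 7"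
  by (simp_all add: hadamard_def walsh_sign_def sum_lessThan_8)

lemma hadamard_hadamard:
  assumes "j < 8"
  shows "hadamard (hadamard v) j = 8 * v j"
  using assms by (cases rule: less_8_cases) (simp_all add: hadamard_expand del: One_nat_def)

lemma hadamard_cong:
  assumes "\<And>j. j < 8 \<Longrightarrow> v j = w j"
  shows "hadamard v c = hadamard w c"
  unfolding hadamard_def using assms by (intro sum.cong) auto

lemma hadamard_inject:
  assumes "\<And>c. c < 8 \<Longrightarrow> hadamard v c = hadamard w c" and "j < 8"
  shows "v j = w j"
proof -
  have "8 * v j = hadamard (hadamard v) j" using assms(2) by (simp add: hadamard_hadamard)
  also have "\<dots> = hadamard (hadamard w) j" using assms(1) by (rule hadamard_cong)
  also have "\<dots> = 8 * w j" using assms(2) by (simp add: hadamard_hadamard)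
  finally show ?thesis by simp
qed

section \<open>Hadamard transforms of flat vectors\<close>

text \<open>X c plays the role of the Walsh value W_{c1 a1 \<oplus> c2 a2 \<oplus> c3 a3 \<oplus> a4}(u), where
  c = c1 + 2 c2 + 4 c3.\<close>

definition even_hadamard_pattern :: "int \<Rightarrow> (nat \<Rightarrow> int) \<Rightarrow> bool" where
  "even_hadamard_pattern K X \<longleftrightarrow> (\<forall>c<8. \<bar>X c\<bar> = K) \<and>
     X 0 * X 2 = X 4 * X 6 \<and> X 4 * X 6 = X 1 * X 3 \<and> X 1 * X 3 = X 5 * X 7 \<and> X 0 * X 4 = X 1 * X 5"

definition odd_hadamard_pattern :: "int \<Rightarrow> (nat \<Rightarrow> int) \<Rightarrow> bool" where
  "odd_hadamard_pattern K X \<longleftrightarrow> (\<forall>c<8. X c = 0 \<or> \<bar>X c\<bar> = 2 * K) \<and>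
     ((X 0 * X 2 = X 1 * X 3 \<and> (X 0 * X 2 = 4 * K\<^sup>2 \<or> X 0 * X 2 = - (4 * K\<^sup>2)) \<and>
       X 4 = 0 \<and> X 6 = 0 \<and> X 5 = 0 \<and> X 7 = 0) \<or>
      (X 0 = 0 \<and> X 2 = 0 \<and> X 1 = 0 \<and> X 3 = 0 \<and> X 4 * X 6 = X 5 * X 7 \<and>
       (X 4 * X 6 = 4 * K\<^sup>2 \<or> X 4 * X 6 = - (4 * K\<^sup>2))))"

lemma even_hadamard_pattern_if_signed_monomial:
  assumes "signed_monomial K v" and "0 \<le> K"
  shows "even_hadamard_pattern K (hadamard v)"
proof -
  obtain k c where k: "k < 8" "c \<in> {K, -K}" and v: "\<forall>j<8. v j = (if j = k then c else 0)"
    using assms(1) unfolding signed_monomial_def by blast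
  have X: "hadamard v d = walsh_sign d k * c" for d
    using k v by (intro hadamard_single) auto
  have "\<bar>hadamard v d\<bar> = K" for d
    using k assms(2) by (auto simp: X abs_mult)
  moreover from k(1) have "hadamard v 0 * hadamard v 2 = hadamard v 4 * hadamard v 6 \<and>
      hadamard v 4 * hadamard v 6 = hadamard v 1 * hadamard v 3 \<and>
      hadamard v 1 * hadamard v 3 = hadamard v 5 * hadamard v 7 \<and>
      hadamard v 0 * hadamard v 4 = hadamard v 1 * hadamard v 5"
    by (cases rule: less_8_cases) (simp_all add: X walsh_sign_def)
  ultimately show ?thesis unfolding even_hadamard_pattern_def by blast
qed

lemma odd_hadamard_pattern_if_signed_binomial:
  assumes "signed_binomial K v" and "0 \<le> K"
  shows "odd_hadamard_pattern K (hadamard v)"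
proof -
  obtain k c d where k: "k < 4" "c \<in> {K, -K}" "d \<in> {K, -K}"
    and v: "\<forall>j<8. v j = (if j = k then c else if j = k + 4 then d else 0)"
    using assms(1) unfolding signed_binomial_def by blast
  have X: "hadamard v e = walsh_sign e k * c + walsh_sign e (k + 4) * d" for e
    using k(1) v by (intro hadamard_pair) auto
  from k(1) have "k = 0 \<or> k = 1 \<or> k = 2 \<or> k = 3" by linarith
  then show ?thesis using k(2,3) assms(2) unfolding odd_hadamard_pattern_def all_less_8
    by (elim disjE) (auto simp: X walsh_sign_def power2_eq_square)
qed

lemma sign_vector_character:
  fixes e :: "nat \<Rightarrow> int"
  assumes "\<forall>c<8. e c = 1 \<or> e c = -1" "e 0 = 1"
    and "e 2 = e 4 * e 6" "e 4 * e 6 = e 1 * e 3" "e 1 * e 3 = e 5 * e 7" "e 4 = e 1 * e 5"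
  shows "\<exists>k<8. \<forall>d<8. e d = walsh_sign d k"
  using assms unfolding all_less_8 ex_less_8
  by (elim conjE disjE) (simp_all add: walsh_sign_def del: One_nat_def)

lemma signed_monomial_if_even_hadamard_pattern:
  assumes "even_hadamard_pattern K (hadamard v)" and "0 < K"
  shows "signed_monomial K v"
proof -
  define X where "X = hadamard v"
  define e where "e c = (if X c = X 0 then 1 else -1 :: int)" for c
  have abs_X: "\<forall>c<8. \<bar>X c\<bar> = K"
    and rel: "X 0 * X 2 = X 4 * X 6" "X 4 * X 6 = X 1 * X 3" "X 1 * X 3 = X 5 * X 7" "X 0 * X 4 = X 1 * X 5"
    using assms(1) unfolding X_def even_hadamard_pattern_def by auto
  have X0: "X 0 \<in> {K, -K}" using abs_X[rule_format, of 0] by auto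
  have X_e: "X c = e c * X 0" if "c < 8" for c
    using abs_X that X0 by (auto simp: e_def)
  have "X 0 \<noteq> 0" using X0 assms(2) by auto
  moreover have "X 1 = e 1 * X 0" "X 2 = e 2 * X 0" "X 3 = e 3 * X 0" "X 4 = e 4 * X 0"
      "X 5 = e 5 * X 0" "X 6 = e 6 * X 0" "X 7 = e 7 * X 0"
    using X_e[of 1] X_e[of 2] X_e[of 3] X_e[of 4] X_e[of 5] X_e[of 6] X_e[of 7] by simp_all
  ultimately have "e 2 = e 4 * e 6" "e 4 * e 6 = e 1 * e 3" "e 1 * e 3 = e 5 * e 7" "e 4 = e 1 * e 5"
    using rel by (simp_all add: algebra_simps)
  moreover have "\<forall>c<8. e c = 1 \<or> e c = -1" "e 0 = 1" by (simp_all add: e_def)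
  ultimately obtain k where "k < 8" and e_k: "\<forall>d<8. e d = walsh_sign d k"
    using sign_vector_character by blast
  define w where "w j = (if j = k then X 0 else 0)" for j
  have "hadamard v d = hadamard w d" if "d < 8" for d
    using X_e[OF that] e_k that \<open>k < 8\<close> by (simp add: X_def w_def hadamard_single)
  then have "v j = w j" if "j < 8" for j using that by (rule hadamard_inject)
  with \<open>k < 8\<close> X0 show ?thesis unfolding signed_monomial_def w_def by blast
qed

lemma sign_vector_character_4:
  fixes e :: "nat \<Rightarrow> int"
  assumes "\<forall>c<4. e c = 1 \<or> e c = -1" "e 0 = 1" "e 2 = e 1 * e 3"
  shows "\<exists>k<4. \<forall>d<4. e d = walsh_sign d k"
proof -
  have all4: "(\<forall>c<4. P c) \<longleftrightarrow> P 0 \<and> P 1 \<and> P 2 \<and> P 3" for P :: "nat \<Rightarrow> bool"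
    by (auto simp: less_Suc_eq numeral_eq_Suc)
  have ex4: "(\<exists>c<4. P c) \<longleftrightarrow> P 0 \<or> P 1 \<or> P 2 \<or> P 3" for P :: "nat \<Rightarrow> bool"
    using all4[of "\<lambda>c. \<not> P c"] by blast
  show ?thesis
    using assms unfolding all4 ex4
    by (elim conjE disjE) (simp_all add: walsh_sign_def del: One_nat_def)
qed

lemma half_hadamard_pattern:
  fixes Y :: "nat \<Rightarrow> int"
  assumes "\<forall>c<4. Y c = 0 \<or> \<bar>Y c\<bar> = 2 * K" and "0 < K"
    and "Y 0 * Y 2 = Y 1 * Y 3" and "Y 0 * Y 2 = 4 * K\<^sup>2 \<or> Y 0 * Y 2 = - (4 * K\<^sup>2)"
  obtains k c where "k < 4" "c \<in> {K, -K}" "\<forall>d<4. Y d = 2 * c * walsh_sign d k"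
proof -
  have "Y 0 * Y 2 \<noteq> 0" using assms(2,4) by auto
  with assms(3) have nonzero: "Y 0 \<noteq> 0" "Y 1 \<noteq> 0" "Y 2 \<noteq> 0" "Y 3 \<noteq> 0" by auto
  have abs_Y: "\<bar>Y c\<bar> = 2 * K" if "c < 4" for c
    using assms(1) that nonzero by (auto simp: less_Suc_eq numeral_eq_Suc)
  define e where "e c = (if Y c = Y 0 then 1 else -1 :: int)" for c
  have Y_e: "Y c = e c * Y 0" if "c < 4" for c
    using abs_Y[OF that] abs_Y[of 0] by (auto simp: e_def)
  have "Y 1 = e 1 * Y 0" "Y 2 = e 2 * Y 0" "Y 3 = e 3 * Y 0"
    using Y_e[of 1] Y_e[of 2] Y_e[of 3] by simp_all
  with assms(3) nonzero have "e 2 = e 1 * e 3" by (simp add: algebra_simps)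
  moreover have "\<forall>c<4. e c = 1 \<or> e c = -1" "e 0 = 1" by (simp_all add: e_def)
  ultimately obtain k where "k < 4" and e_k: "\<forall>d<4. e d = walsh_sign d k"
    using sign_vector_character_4 by blast
  have "Y 0 = 2 * K \<or> Y 0 = 2 * (- K)" using abs_Y[of 0] by auto
  then obtain c where "c \<in> {K, -K}" "Y 0 = 2 * c" by blast
  with \<open>k < 4\<close> e_k Y_e show thesis by (intro that[of k c]) auto
qed

lemma signed_binomial_if_odd_hadamard_pattern:
  assumes "odd_hadamard_pattern K (hadamard v)" and "0 < K"
  shows "signed_binomial K v"
proof -
  define X where "X = hadamard v"
  have abs_X: "\<forall>c<8. X c = 0 \<or> \<bar>X c\<bar> = 2 * K"
    using assms(1) unfolding X_def odd_hadamard_pattern_def by blast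
  have upper: "e = 4 \<or> e = 5 \<or> e = 6 \<or> e = 7" if "e < 8" "\<not> e < 4" for e :: nat
    using that by linarith
  have "\<exists>k<4. \<exists>c\<in>{K, -K}. \<exists>d\<in>{c, -c}. \<forall>e<8. X e = walsh_sign e k * c + walsh_sign e (k + 4) * d"
  proof -
    from assms(1) consider
        (low) "X 0 * X 2 = X 1 * X 3" "X 0 * X 2 = 4 * K\<^sup>2 \<or> X 0 * X 2 = - (4 * K\<^sup>2)"
          "X 4 = 0" "X 6 = 0" "X 5 = 0" "X 7 = 0"
      | (high) "X 0 = 0" "X 2 = 0" "X 1 = 0" "X 3 = 0" "X 4 * X 6 = X 5 * X 7"
          "X 4 * X 6 = 4 * K\<^sup>2 \<or> X 4 * X 6 = - (4 * K\<^sup>2)"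
      unfolding X_def odd_hadamard_pattern_def by blast
    then show ?thesis
    proof cases
      case low
      obtain k c where k: "k < 4" "c \<in> {K, -K}" and X_low: "\<forall>d<4. X d = 2 * c * walsh_sign d k"
        using half_hadamard_pattern[of X K] abs_X low(1,2) assms(2) by auto
      have "X e = walsh_sign e k * c + walsh_sign e (k + 4) * c" if "e < 8" for e
        using X_low k(1) that low(3-6) upper[OF that] by (auto simp: walsh_sign_shift_4)
      with k show ?thesis by blast
    next
      case high
      obtain k c where k: "k < 4" "c \<in> {K, -K}" and X_high: "\<forall>d<4. X (d + 4) = 2 * c * walsh_sign d k"
        using half_hadamard_pattern[of "\<lambda>d. X (d + 4)" K] abs_X high(5,6) assms(2) by auto
      have "X e = walsh_sign e k * c + walsh_sign e (k + 4) * (- c)" if "e < 8" for e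
      proof (cases "e < 4")
        case True
        then have "e = 0 \<or> e = 1 \<or> e = 2 \<or> e = 3" by linarith
        with high(1-4) have "X e = 0" by auto
        with True that k(1) show ?thesis by (simp add: walsh_sign_shift_4)
      next
        case False
        then have "X e = 2 * c * walsh_sign (e - 4) k"
          using X_high[rule_format, of "e - 4"] that by simp
        with False that k(1) show ?thesis by (simp add: walsh_sign_shift_4)
      qed
      with k show ?thesis by blast
    qed
  qed
  then obtain k c d where k: "k < 4" "c \<in> {K, -K}" "d \<in> {c, -c}"
    and X: "\<forall>e<8. X e = walsh_sign e k * c + walsh_sign e (k + 4) * d" by blast
  define w where "w j = (if j = k then c else if j = k + 4 then d else 0)" for j
  have "hadamard v e = hadamard w e" if "e < 8" for e
    using X that k(1) by (simp add: X_def w_def hadamard_pair)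
  then have "v j = w j" if "j < 8" for j using that by (rule hadamard_inject)
  moreover have "d \<in> {K, -K}" using k by auto
  ultimately show ?thesis using k unfolding signed_binomial_def w_def by blast
qed

lemma flat_corr_iff_even_hadamard_pattern:
  assumes "even n"
  shows "flat_corr n v \<longleftrightarrow> even_hadamard_pattern (2 ^ (n div 2)) (hadamard v)"
proof
  assume "flat_corr n v"
  with assms have "signed_monomial (2 ^ (n div 2)) v" using flat_corr_classification by simp
  then show "even_hadamard_pattern (2 ^ (n div 2)) (hadamard v)"
    by (rule even_hadamard_pattern_if_signed_monomial) simp
next
  assume "even_hadamard_pattern (2 ^ (n div 2)) (hadamard v)"
  then have "signed_monomial (2 ^ (n div 2)) v" by (rule signed_monomial_if_even_hadamard_pattern) simp
  moreover have "((2::int) ^ (n div 2))\<^sup>2 = 2 ^ n" using assms by (simp flip: power_mult)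
  ultimately show "flat_corr n v" by (rule flat_corr_if_signed_monomial)
qed

lemma flat_corr_iff_odd_hadamard_pattern:
  assumes "odd n"
  shows "flat_corr n v \<longleftrightarrow> odd_hadamard_pattern (2 ^ (n div 2)) (hadamard v)"
proof
  assume "flat_corr n v"
  with assms have "signed_binomial (2 ^ (n div 2)) v" using flat_corr_classification by simp
  then show "odd_hadamard_pattern (2 ^ (n div 2)) (hadamard v)"
    by (rule odd_hadamard_pattern_if_signed_binomial) simp
next
  assume "odd_hadamard_pattern (2 ^ (n div 2)) (hadamard v)"
  then have "signed_binomial (2 ^ (n div 2)) v" by (rule signed_binomial_if_odd_hadamard_pattern) simp
  moreover have "2 * ((2::int) ^ (n div 2))\<^sup>2 = 2 ^ n"
  proof -
    from assms obtain m where "n = 2 * m + 1" by (rule oddE)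
    then show ?thesis by (simp add: power_mult_distrib flip: power_mult)
  qed
  ultimately show "flat_corr n v" by (rule flat_corr_if_signed_binomial)
qed

section \<open>Generalized Boolean functions into Z_16\<close>

type_synonym boolfun = "bool list \<Rightarrow> bool"

definition level :: "boolfun \<Rightarrow> boolfun \<Rightarrow> boolfun \<Rightarrow> bool list \<Rightarrow> nat" where
  "level a1 a2 a3 x = of_bool (a1 x) + 2 * of_bool (a2 x) + 4 * of_bool (a3 x)"

definition level_walsh :: "nat \<Rightarrow> boolfun \<Rightarrow> boolfun \<Rightarrow> boolfun \<Rightarrow> boolfun \<Rightarrow> bool list \<Rightarrow> nat \<Rightarrow> int" where
  "level_walsh n a1 a2 a3 a4 u k =
     (\<Sum>x\<in>vecs n. if level a1 a2 a3 x = k then (-1) ^ (of_bool (a4 x) + of_bool (dotp u x)) else 0)"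

lemma finite_vecs: "finite (vecs n)"
proof -
  have "vecs n = {xs. set xs \<subseteq> UNIV \<and> length xs = n}" unfolding vecs_def by auto
  then show ?thesis using finite_lists_length_eq[OF finite_UNIV] by simp
qed

lemma sum_by_level:
  fixes h :: "nat \<Rightarrow> 'a::comm_ring_1" and s :: "'b \<Rightarrow> int"
  assumes "finite S" and "\<And>x. x \<in> S \<Longrightarrow> j x < N"
  shows "(\<Sum>x\<in>S. h (j x) * of_int (s x)) = (\<Sum>k<N. h k * of_int (\<Sum>x\<in>S. if j x = k then s x else 0))"
proof -
  have "(\<Sum>k<N. h k * of_int (\<Sum>x\<in>S. if j x = k then s x else 0))
      = (\<Sum>k<N. \<Sum>x\<in>S. if j x = k then h k * of_int (s x) else 0)"
    by (simp add: sum_distrib_left if_distrib cong: if_cong)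
  also have "\<dots> = (\<Sum>x\<in>S. \<Sum>k<N. if j x = k then h k * of_int (s x) else 0)"
    by (rule sum.swap)
  also have "\<dots> = (\<Sum>x\<in>S. h (j x) * of_int (s x))"
    using assms(2) by (intro sum.cong) auto
  finally show ?thesis by simp
qed

lemma gwalsh_eq_zeta_sum:
  "gwalsh 16 n (\<lambda>x. (of_bool (a1 x) + 2 * of_bool (a2 x) + 4 * of_bool (a3 x) + 8 * of_bool (a4 x)) mod 16) u
     = zeta_sum (level_walsh n a1 a2 a3 a4 u)" (is "?lhs = _")
proof -
  have summand: "cis (2 * pi / real 16) ^ ((of_bool (a1 x) + 2 * of_bool (a2 x) + 4 * of_bool (a3 x) + 8 * of_bool (a4 x)) mod 16)
        * (-1) ^ of_bool (dotp u x)
      = zeta ^ level a1 a2 a3 x * of_int ((-1) ^ (of_bool (a4 x) + of_bool (dotp u x)))" for x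
  proof -
    have exponent: "(of_bool (a1 x) + 2 * of_bool (a2 x) + 4 * of_bool (a3 x) + 8 * of_bool (a4 x)) mod 16
        = level a1 a2 a3 x + 8 * of_bool (a4 x)"
      unfolding level_def by (cases "a1 x"; cases "a2 x"; cases "a3 x"; cases "a4 x") simp_all
    have "cis (2 * pi / real 16) = zeta" unfolding zeta_def by simp
    then have "cis (2 * pi / real 16) ^ ((of_bool (a1 x) + 2 * of_bool (a2 x) + 4 * of_bool (a3 x) + 8 * of_bool (a4 x)) mod 16)
        = zeta ^ level a1 a2 a3 x * (zeta ^ 8) ^ of_bool (a4 x)"
      unfolding exponent by (simp add: power_add power_mult)
    then show ?thesis unfolding zeta_pow_8 by (simp add: power_add)
  qed
  have "?lhs = (\<Sum>x\<in>vecs n. zeta ^ level a1 a2 a3 x * of_int ((-1) ^ (of_bool (a4 x) + of_bool (dotp u x))))"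
    unfolding gwalsh_def summand ..
  also have "\<dots> = zeta_sum (level_walsh n a1 a2 a3 a4 u)"
    unfolding zeta_sum_def level_walsh_def
    by (subst sum_by_level[OF finite_vecs]) (auto simp: level_def mult.commute)
  finally show ?thesis .
qed

lemma walsh_sign_level:
  "walsh_sign (of_bool c1 + 2 * of_bool c2 + 4 * of_bool c3) (level a1 a2 a3 x)
     = (-1) ^ of_bool (bxor (bxor (c1 \<and> a1 x) (c2 \<and> a2 x)) (c3 \<and> a3 x))"
  by (cases c1; cases c2; cases c3; cases "a1 x"; cases "a2 x"; cases "a3 x")
    (simp_all add: walsh_sign_def level_def bxor_def)

lemma walsh_xor_combination:
  "walsh n (\<lambda>x. bxor (bxor (bxor (c1 \<and> a1 x) (c2 \<and> a2 x)) (c3 \<and> a3 x)) (a4 x)) u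
     = of_int (hadamard (level_walsh n a1 a2 a3 a4 u) (of_bool c1 + 2 * of_bool c2 + 4 * of_bool c3))"
proof -
  let ?c = "of_bool c1 + 2 * of_bool c2 + 4 * of_bool c3"
  have sign_split: "(-1::real) ^ (of_bool (bxor p q) + r) = (-1) ^ of_bool p * (-1) ^ (of_bool q + r)"
    for p q r by (cases p; cases q) (simp_all add: bxor_def power_add)
  have "walsh n (\<lambda>x. bxor (bxor (bxor (c1 \<and> a1 x) (c2 \<and> a2 x)) (c3 \<and> a3 x)) (a4 x)) u
      = (\<Sum>x\<in>vecs n. of_int (walsh_sign ?c (level a1 a2 a3 x))
                       * of_int ((-1) ^ (of_bool (a4 x) + of_bool (dotp u x))))"
    unfolding walsh_def sign_split walsh_sign_level by simp
  also have "\<dots> = (\<Sum>k<8. of_int (walsh_sign ?c k) * of_int (level_walsh n a1 a2 a3 a4 u k))"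
    unfolding level_walsh_def by (rule sum_by_level[OF finite_vecs]) (simp add: level_def)
  also have "\<dots> = of_int (hadamard (level_walsh n a1 a2 a3 a4 u) ?c)"
    by (simp add: hadamard_def)
  finally show ?thesis .
qed

lemma all_bool3_index:
  "(\<forall>c1 c2 c3. P (of_bool c1 + 2 * of_bool c2 + 4 * of_bool c3)) \<longleftrightarrow> (\<forall>c<8. P c)"
  for P :: "nat \<Rightarrow> bool"
proof
  assume P: "\<forall>c1 c2 c3. P (of_bool c1 + 2 * of_bool c2 + 4 * of_bool c3)"
  show "\<forall>c<8. P c"
  proof (intro allI impI)
    fix c :: nat assume "c < 8"
    then have "c = of_bool (odd c) + 2 * of_bool (odd (c div 2)) + 4 * of_bool (odd (c div 4))"
      by (cases rule: less_8_cases) simp_all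
    with P show "P c" by metis
  qed
qed auto

lemma bent_xor_combinations_iff:
  assumes "even n"
  shows "(\<forall>c1 c2 c3. bent n (\<lambda>x. bxor (bxor (bxor (c1 \<and> a1 x) (c2 \<and> a2 x)) (c3 \<and> a3 x)) (a4 x)))
     \<longleftrightarrow> (\<forall>u\<in>vecs n. \<forall>c<8. \<bar>hadamard (level_walsh n a1 a2 a3 a4 u) c\<bar> = 2 ^ (n div 2))"
proof -
  have "2 powr (real n / 2) = real_of_int (2 ^ (n div 2))"
    using assms by (auto simp: powr_realpow elim!: evenE)
  then have "(\<forall>c1 c2 c3. bent n (\<lambda>x. bxor (bxor (bxor (c1 \<and> a1 x) (c2 \<and> a2 x)) (c3 \<and> a3 x)) (a4 x)))
      \<longleftrightarrow> (\<forall>c1 c2 c3. \<forall>u\<in>vecs n.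
            \<bar>hadamard (level_walsh n a1 a2 a3 a4 u) (of_bool c1 + 2 * of_bool c2 + 4 * of_bool c3)\<bar> = 2 ^ (n div 2))"
    unfolding bent_def walsh_xor_combination by (simp flip: of_int_abs)
  also have "\<dots> \<longleftrightarrow> (\<forall>c<8. \<forall>u\<in>vecs n. \<bar>hadamard (level_walsh n a1 a2 a3 a4 u) c\<bar> = 2 ^ (n div 2))"
    by (rule all_bool3_index)
  finally show ?thesis by blast
qed

lemma semibent_xor_combinations_iff:
  assumes "odd n"
  shows "(\<forall>c1 c2 c3. semibent n (\<lambda>x. bxor (bxor (bxor (c1 \<and> a1 x) (c2 \<and> a2 x)) (c3 \<and> a3 x)) (a4 x)))
     \<longleftrightarrow> (\<forall>u\<in>vecs n. \<forall>c<8. hadamard (level_walsh n a1 a2 a3 a4 u) c = 0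
                         \<or> \<bar>hadamard (level_walsh n a1 a2 a3 a4 u) c\<bar> = 2 * 2 ^ (n div 2))"
proof -
  have powr_eq: "2 powr ((real n + 1) / 2) = real_of_int (2 * 2 ^ (n div 2))"
  proof -
    from assms obtain m where "n = 2 * m + 1" by (rule oddE)
    then have exponent: "(real n + 1) / 2 = real (Suc m)" and "n div 2 = m" by simp_all
    have "2 powr ((real n + 1) / 2) = 2 ^ Suc m"
      unfolding exponent by (rule powr_realpow) simp
    with \<open>n div 2 = m\<close> show ?thesis by simp
  qed
  have abs_iff: "\<bar>real_of_int h\<bar> \<in> (if odd n then {0, 2 powr ((real n + 1) / 2)} else {0, 2 powr ((real n + 2) / 2)})
      \<longleftrightarrow> h = 0 \<or> \<bar>h\<bar> = 2 * 2 ^ (n div 2)" for h :: int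
  proof -
    have "\<bar>real_of_int h\<bar> = real_of_int (2 * 2 ^ (n div 2)) \<longleftrightarrow> \<bar>h\<bar> = 2 * 2 ^ (n div 2)"
      by (metis of_int_abs of_int_eq_iff)
    with assms powr_eq show ?thesis by simp
  qed
  have "(\<forall>c1 c2 c3. semibent n (\<lambda>x. bxor (bxor (bxor (c1 \<and> a1 x) (c2 \<and> a2 x)) (c3 \<and> a3 x)) (a4 x)))
      \<longleftrightarrow> (\<forall>c1 c2 c3. \<forall>u\<in>vecs n.
            hadamard (level_walsh n a1 a2 a3 a4 u) (of_bool c1 + 2 * of_bool c2 + 4 * of_bool c3) = 0 \<or>
            \<bar>hadamard (level_walsh n a1 a2 a3 a4 u) (of_bool c1 + 2 * of_bool c2 + 4 * of_bool c3)\<bar> = 2 * 2 ^ (n div 2))"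
    unfolding semibent_def walsh_xor_combination abs_iff ..
  also have "\<dots> \<longleftrightarrow> (\<forall>c<8. \<forall>u\<in>vecs n. hadamard (level_walsh n a1 a2 a3 a4 u) c = 0
                         \<or> \<bar>hadamard (level_walsh n a1 a2 a3 a4 u) c\<bar> = 2 * 2 ^ (n div 2))"
    by (rule all_bool3_index)
  finally show ?thesis by blast
qed

lemma walsh_xor_instances:
  "walsh n d u = of_int (hadamard (level_walsh n a b c d u) 0)"
  "walsh n (\<lambda>x. bxor (a x) (d x)) u = of_int (hadamard (level_walsh n a b c d u) 1)"
  "walsh n (\<lambda>x. bxor (b x) (d x)) u = of_int (hadamard (level_walsh n a b c d u) 2)"
  "walsh n (\<lambda>x. bxor (bxor (a x) (b x)) (d x)) u = of_int (hadamard (level_walsh n a b c d u) 3)"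
  "walsh n (\<lambda>x. bxor (c x) (d x)) u = of_int (hadamard (level_walsh n a b c d u) 4)"
  "walsh n (\<lambda>x. bxor (bxor (a x) (c x)) (d x)) u = of_int (hadamard (level_walsh n a b c d u) 5)"
  "walsh n (\<lambda>x. bxor (bxor (b x) (c x)) (d x)) u = of_int (hadamard (level_walsh n a b c d u) 6)"
  "walsh n (\<lambda>x. bxor (bxor (bxor (a x) (b x)) (c x)) (d x)) u = of_int (hadamard (level_walsh n a b c d u) 7)"
  using walsh_xor_combination[of n False a False b False c d u]
    walsh_xor_combination[of n True a False b False c d u]
    walsh_xor_combination[of n False a True b False c d u]
    walsh_xor_combination[of n True a True b False c d u]
    walsh_xor_combination[of n False a False b True c d u]
    walsh_xor_combination[of n True a False b True c d u]
    walsh_xor_combination[of n False a True b True c d u]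
    walsh_xor_combination[of n True a True b True c d u]
  by (simp_all add: bxor_def eval_nat_numeral)

theorem mainTheorem7:
  fixes n :: nat and a1 a2 a3 a4 :: "bool list \<Rightarrow> bool"
  defines "f \<equiv> (\<lambda>x. (of_bool (a1 x) + 2 * of_bool (a2 x) + 4 * of_bool (a3 x) + 8 * of_bool (a4 x)) mod 16 :: nat)"
  defines "W \<equiv> (\<lambda>g. walsh n g)"
  shows "gbent 16 n f \<longleftrightarrow>
    (if even n then
       (\<forall>c1 c2 c3. bent n (\<lambda>x. bxor (bxor (bxor (c1 \<and> a1 x) (c2 \<and> a2 x)) (c3 \<and> a3 x)) (a4 x)))
       \<and> (\<forall>u\<in>vecs n.
            W a4 u * W (\<lambda>x. bxor (a2 x) (a4 x)) u
              = W (\<lambda>x. bxor (a3 x) (a4 x)) u * W (\<lambda>x. bxor (bxor (a2 x) (a3 x)) (a4 x)) u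
          \<and> W (\<lambda>x. bxor (a3 x) (a4 x)) u * W (\<lambda>x. bxor (bxor (a2 x) (a3 x)) (a4 x)) u
              = W (\<lambda>x. bxor (a1 x) (a4 x)) u * W (\<lambda>x. bxor (bxor (a1 x) (a2 x)) (a4 x)) u
          \<and> W (\<lambda>x. bxor (a1 x) (a4 x)) u * W (\<lambda>x. bxor (bxor (a1 x) (a2 x)) (a4 x)) u
              = W (\<lambda>x. bxor (bxor (a1 x) (a3 x)) (a4 x)) u
                * W (\<lambda>x. bxor (bxor (bxor (a1 x) (a2 x)) (a3 x)) (a4 x)) u
          \<and> W a4 u * W (\<lambda>x. bxor (a3 x) (a4 x)) u
              = W (\<lambda>x. bxor (a1 x) (a4 x)) u * W (\<lambda>x. bxor (bxor (a1 x) (a3 x)) (a4 x)) u)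
     else
       (\<forall>c1 c2 c3. semibent n (\<lambda>x. bxor (bxor (bxor (c1 \<and> a1 x) (c2 \<and> a2 x)) (c3 \<and> a3 x)) (a4 x)))
       \<and> (\<forall>u\<in>vecs n.
            (W a4 u * W (\<lambda>x. bxor (a2 x) (a4 x)) u
               = W (\<lambda>x. bxor (a1 x) (a4 x)) u * W (\<lambda>x. bxor (bxor (a1 x) (a2 x)) (a4 x)) u
             \<and> (W a4 u * W (\<lambda>x. bxor (a2 x) (a4 x)) u = 2 ^ (n + 1)
                \<or> W a4 u * W (\<lambda>x. bxor (a2 x) (a4 x)) u = - (2 ^ (n + 1)))
             \<and> W (\<lambda>x. bxor (a3 x) (a4 x)) u = 0
             \<and> W (\<lambda>x. bxor (bxor (a2 x) (a3 x)) (a4 x)) u = 0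
             \<and> W (\<lambda>x. bxor (bxor (a1 x) (a3 x)) (a4 x)) u = 0
             \<and> W (\<lambda>x. bxor (bxor (bxor (a1 x) (a2 x)) (a3 x)) (a4 x)) u = 0)
          \<or> (W a4 u = 0
             \<and> W (\<lambda>x. bxor (a2 x) (a4 x)) u = 0
             \<and> W (\<lambda>x. bxor (a1 x) (a4 x)) u = 0
             \<and> W (\<lambda>x. bxor (bxor (a1 x) (a2 x)) (a4 x)) u = 0
             \<and> W (\<lambda>x. bxor (a3 x) (a4 x)) u * W (\<lambda>x. bxor (bxor (a2 x) (a3 x)) (a4 x)) u
                 = W (\<lambda>x. bxor (bxor (a1 x) (a3 x)) (a4 x)) u
                   * W (\<lambda>x. bxor (bxor (bxor (a1 x) (a2 x)) (a3 x)) (a4 x)) u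
             \<and> (W (\<lambda>x. bxor (a3 x) (a4 x)) u * W (\<lambda>x. bxor (bxor (a2 x) (a3 x)) (a4 x)) u = 2 ^ (n + 1)
                \<or> W (\<lambda>x. bxor (a3 x) (a4 x)) u * W (\<lambda>x. bxor (bxor (a2 x) (a3 x)) (a4 x)) u = - (2 ^ (n + 1))))))"
proof -
  define K where "K = (2::int) ^ (n div 2)"
  have gbent_iff: "gbent 16 n f \<longleftrightarrow> (\<forall>u\<in>vecs n. flat_corr n (level_walsh n a1 a2 a3 a4 u))"
    unfolding gbent_def f_def gwalsh_eq_zeta_sum norm_zeta_sum_eq_iff_flat_corr ..
  note of_int_iffs = of_int_mult[symmetric] of_int_minus[symmetric] of_int_eq_iff of_int_eq_0_iff
  show ?thesis
  proof (cases "even n")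
    case True
    then show ?thesis
      unfolding gbent_iff flat_corr_iff_even_hadamard_pattern[OF True] bent_xor_combinations_iff[OF True]
        W_def walsh_xor_instances[where a = a1 and b = a2 and c = a3 and d = a4] even_hadamard_pattern_def of_int_iffs
      by auto
  next
    case False
    have two_pow: "(2::real) ^ (n + 1) = real_of_int (4 * K\<^sup>2)"
    proof -
      from False obtain m where "n = 2 * m + 1" by (rule oddE)
      then show ?thesis unfolding K_def by (simp add: power_mult_distrib flip: power_mult)
    qed
    show ?thesis
      using False unfolding gbent_iff flat_corr_iff_odd_hadamard_pattern[OF False] semibent_xor_combinations_iff[OF False]
        W_def walsh_xor_instances[where a = a1 and b = a2 and c = a3 and d = a4] two_pow
        odd_hadamard_pattern_def K_def[symmetric] of_int_iffs
      by auto
  qed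
qed

end
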